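(* Let $L$ be a nonarchimedean field extension of a perfectoid field $K$ such that the residue field $\widetilde L$ has positive transcendence degree over $\widetilde K$, and assume $\widetilde K$ is uncountable. Then $L$ is not a quotient field of a perfectoid Tate algebra $K\langle x_1^{1/p^\infty},\dots,x_n^{1/p^\infty}\rangle$ in any number $n$ of variables (i.e., there is no continuous surjection from such an algebra onto $L$).
   Context: Tildes denote residue fields of nonarchimedean fields. *)

theory Defs
  imports Complex_Main "HOL-Library.Countable_Set" "HOL-Computational_Algebra.Primes"
begin

definition nonarch_abs :: "('a::field \<Rightarrow> real) \<Rightarrow> bool" where
  "nonarch_abs v \<longleftrightarrow> (\<forall>x. 0 \<le> v x) \<and> (\<forall>x. v x = 0 \<longleftrightarrow> x = 0)
     \<and> (\<forall>x y. v (x * y) = v x * v y) \<and> (\<forall>x y. v (x + y) \<le> max (v x) (v y))"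

definition nonarch_field :: "('a::field \<Rightarrow> real) \<Rightarrow> bool" where
  "nonarch_field v \<longleftrightarrow> nonarch_abs v \<and> (\<exists>x. x \<noteq> 0 \<and> v x \<noteq> 1)"

definition abs_complete :: "('a::field \<Rightarrow> real) \<Rightarrow> bool" where
  "abs_complete v \<longleftrightarrow> (\<forall>X :: nat \<Rightarrow> 'a.
     (\<forall>e>0. \<exists>N. \<forall>m\<ge>N. \<forall>n\<ge>N. v (X m - X n) < e)
       \<longrightarrow> (\<exists>l. \<forall>e>0. \<exists>N. \<forall>n\<ge>N. v (X n - l) < e))"

text \<open>Perfectoid field (Scholze): complete nonarchimedean field of residue characteristic p
  whose value group is nondiscrete (1 is an accumulation point of the value group), such that
  Frobenius is surjective on K-circ / p.\<close>
definition perfectoid_field :: "('a::field \<Rightarrow> real) \<Rightarrow> nat \<Rightarrow> bool" where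
  "perfectoid_field v p \<longleftrightarrow> nonarch_field v \<and> abs_complete v \<and> prime p \<and> v (of_nat p) < 1
     \<and> (\<forall>\<epsilon>>0. \<exists>x. x \<noteq> 0 \<and> v x \<noteq> 1 \<and> \<bar>v x - 1\<bar> < \<epsilon>)
     \<and> (\<forall>x. v x \<le> 1 \<longrightarrow> (\<exists>y. v y \<le> 1 \<and> v (y ^ p - x) \<le> v (of_nat p)))"

definition nonarch_ext :: "('k::field \<Rightarrow> real) \<Rightarrow> ('l::field \<Rightarrow> real) \<Rightarrow> ('k \<Rightarrow> 'l) \<Rightarrow> bool" where
  "nonarch_ext vK vL \<iota> \<longleftrightarrow> nonarch_field vL
     \<and> (\<forall>a b. \<iota> (a + b) = \<iota> a + \<iota> b) \<and> (\<forall>a b. \<iota> (a * b) = \<iota> a * \<iota> b) \<and> \<iota> 1 = 1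
     \<and> (\<forall>a. vL (\<iota> a) = vK a)"

definition residue_field :: "('a::field \<Rightarrow> real) \<Rightarrow> 'a set set" where
  "residue_field v = {x. v x \<le> 1} // {(x, y). v x \<le> 1 \<and> v y \<le> 1 \<and> v (x - y) < 1}"

text \<open>For t in the valuation ring of L: the residue class of t is algebraic over the residue
  field of K, i.e. it is a root of a nonzero polynomial with coefficients in the residue field
  of K (written on representatives: coefficients c i in the valuation ring of K, not all in the
  maximal ideal, and the value of the polynomial at t lies in the maximal ideal of L).\<close>
definition residue_algebraic :: "('k::field \<Rightarrow> real) \<Rightarrow> ('l::field \<Rightarrow> real) \<Rightarrow> ('k \<Rightarrow> 'l) \<Rightarrow> 'l \<Rightarrow> bool" where
  "residue_algebraic vK vL \<iota> t \<longleftrightarrow> (\<exists>(n::nat) (c::nat \<Rightarrow> 'k).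
     (\<forall>i\<le>n. vK (c i) \<le> 1) \<and> (\<exists>i\<le>n. \<not> vK (c i) < 1)
     \<and> vL (\<Sum>i\<le>n. \<iota> (c i) * t ^ i) < 1)"

text \<open>Positive transcendence degree of the residue field extension: the extension is not
  algebraic, i.e. some residue class is transcendental.\<close>
definition residue_trdeg_pos :: "('k::field \<Rightarrow> real) \<Rightarrow> ('l::field \<Rightarrow> real) \<Rightarrow> ('k \<Rightarrow> 'l) \<Rightarrow> bool" where
  "residue_trdeg_pos vK vL \<iota> \<longleftrightarrow> (\<exists>t. vL t \<le> 1 \<and> \<not> residue_algebraic vK vL \<iota> t)"

text \<open>Exponents: vectors in (Z[1/p]_{\<ge>0})^n, encoded as functions nat => rat vanishing from n on.\<close>
definition pexp :: "nat \<Rightarrow> nat \<Rightarrow> (nat \<Rightarrow> rat) set" where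
  "pexp p n = {e. (\<forall>i. 0 \<le> e i) \<and> (\<forall>i\<ge>n. e i = 0)
                 \<and> (\<forall>i. \<exists>k m. e i = of_nat k / of_nat (p ^ m))}"

text \<open>Elements: formal series sum a_e x^e with coefficients tending to zero.\<close>
definition perfd_tate :: "('k::field \<Rightarrow> real) \<Rightarrow> nat \<Rightarrow> nat \<Rightarrow> ((nat \<Rightarrow> rat) \<Rightarrow> 'k) set" where
  "perfd_tate v p n = {a. (\<forall>e. e \<notin> pexp p n \<longrightarrow> a e = 0) \<and> (\<forall>\<epsilon>>0. finite {e. \<epsilon> \<le> v (a e)})}"

definition has_vsum :: "('k::field \<Rightarrow> real) \<Rightarrow> ('i \<Rightarrow> 'k) \<Rightarrow> 'i set \<Rightarrow> 'k \<Rightarrow> bool" where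
  "has_vsum v f S s \<longleftrightarrow> (\<forall>\<epsilon>>0. \<exists>F0. finite F0 \<and> F0 \<subseteq> S \<and>
     (\<forall>F. finite F \<and> F0 \<subseteq> F \<and> F \<subseteq> S \<longrightarrow> v (sum f F - s) < \<epsilon>))"

definition tate_add :: "((nat \<Rightarrow> rat) \<Rightarrow> 'k::field) \<Rightarrow> ((nat \<Rightarrow> rat) \<Rightarrow> 'k) \<Rightarrow> ((nat \<Rightarrow> rat) \<Rightarrow> 'k)" where
  "tate_add a b = (\<lambda>e. a e + b e)"

definition tate_mult :: "('k::field \<Rightarrow> real) \<Rightarrow> nat \<Rightarrow> nat \<Rightarrow>
    ((nat \<Rightarrow> rat) \<Rightarrow> 'k) \<Rightarrow> ((nat \<Rightarrow> rat) \<Rightarrow> 'k) \<Rightarrow> ((nat \<Rightarrow> rat) \<Rightarrow> 'k)" where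
  "tate_mult v p n a b = (\<lambda>e. THE s. has_vsum v (\<lambda>(e1, e2). a e1 * b e2)
      {(e1, e2). e1 \<in> pexp p n \<and> e2 \<in> pexp p n \<and> (\<forall>i. e1 i + e2 i = e i)} s)"

definition tate_const :: "'k::field \<Rightarrow> ((nat \<Rightarrow> rat) \<Rightarrow> 'k)" where
  "tate_const c = (\<lambda>e. if (\<forall>i. e i = 0) then c else 0)"

definition gauss_norm :: "('k::field \<Rightarrow> real) \<Rightarrow> ((nat \<Rightarrow> rat) \<Rightarrow> 'k) \<Rightarrow> real" where
  "gauss_norm v a = Sup (range (\<lambda>e. v (a e)))"

definition tate_quotient_map :: "('k::field \<Rightarrow> real) \<Rightarrow> ('l::field \<Rightarrow> real) \<Rightarrow> ('k \<Rightarrow> 'l) \<Rightarrow>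
    nat \<Rightarrow> nat \<Rightarrow> (((nat \<Rightarrow> rat) \<Rightarrow> 'k) \<Rightarrow> 'l) \<Rightarrow> bool" where
  "tate_quotient_map vK vL \<iota> p n \<phi> \<longleftrightarrow>
     (\<forall>a\<in>perfd_tate vK p n. \<forall>b\<in>perfd_tate vK p n.
        \<phi> (tate_add a b) = \<phi> a + \<phi> b \<and> \<phi> (tate_mult vK p n a b) = \<phi> a * \<phi> b)
     \<and> (\<forall>c. \<phi> (tate_const c) = \<iota> c)
     \<and> (\<forall>a\<in>perfd_tate vK p n. \<forall>\<epsilon>>0. \<exists>\<delta>>0. \<forall>b\<in>perfd_tate vK p n.
          gauss_norm vK (\<lambda>e. b e - a e) < \<delta> \<longrightarrow> vL (\<phi> b - \<phi> a) < \<epsilon>)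
     \<and> \<phi> ` perfd_tate vK p n = UNIV"

end

(* Continuity and surjectivity make every element of L congruent, modulo the maximal ideal of L,
   to a K-linear combination of images of monomials; as the exponents form a countable set, all
   these combinations lie in the K-span of a countable set. Fix t in the valuation ring of L with
   transcendental residue, representatives a_X of the uncountably many residue classes X of K, and
   such approximations d_X of 1 / (t - a_X). A nontrivial K-linear relation among the d_X, scaled
   to have largest coefficient 1, turns after multiplication by the unit prod_X (t - a_X) into a
   polynomial with a unit coefficient whose value at t lies in the maximal ideal, contradicting
   the transcendence of the residue of t. So the d_X form an uncountable independent family inside
   the span of a countable set, which is impossible. *)

theory Submission
  imports Defs "HOL-Computational_Algebra.Polynomial"
begin

locale nonarch_absval =
  fixes v :: "'a::field \<Rightarrow> real"
  assumes nonarch_abs: "nonarch_abs v"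
begin

lemma nonneg: "0 \<le> v x"
  using nonarch_abs unfolding nonarch_abs_def by blast

lemma zero_iff: "v x = 0 \<longleftrightarrow> x = 0"
  using nonarch_abs unfolding nonarch_abs_def by blast

lemma zero [simp]: "v 0 = 0"
  using zero_iff by blast

lemma multiplicative: "v (x * y) = v x * v y"
  using nonarch_abs unfolding nonarch_abs_def by blast

lemma ultrametric: "v (x + y) \<le> max (v x) (v y)"
  using nonarch_abs unfolding nonarch_abs_def by blast

lemma one [simp]: "v 1 = 1"
  using multiplicative[of 1 1] zero_iff[of 1] by simp

lemma minus [simp]: "v (- x) = v x"
proof -
  have "(v (- 1) - 1) * (v (- 1) + 1) = 0"
    using multiplicative[of "- 1" "- 1"] by (simp add: algebra_simps)
  moreover have "v (- 1) + 1 \<noteq> 0"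
    using nonneg[of "- 1"] by simp
  ultimately have "v (- 1) = 1"
    by simp
  then show ?thesis
    using multiplicative[of "- 1" x] by simp
qed

lemma diff_le_max: "v (x - y) \<le> max (v x) (v y)"
  using ultrametric[of x "- y"] by simp

lemma diff_commute: "v (x - y) = v (y - x)"
  by (metis minus minus_diff_eq)

lemma divide: "v (x / y) = v x / v y"
proof (cases "y = 0")
  case False
  then have "v (x / y) * v y = v x"
    by (metis multiplicative nonzero_divide_eq_eq)
  then show ?thesis
    using False zero_iff by (simp add: eq_divide_eq)
qed simp

lemma power: "v (x ^ n) = v x ^ n"
  by (induction n) (simp_all add: multiplicative)

lemma prod: "v (prod f S) = (\<Prod>i\<in>S. v (f i))"
  by (induction S rule: infinite_finite_induct) (simp_all add: multiplicative)

lemma mult_le_right: "v x \<le> 1 \<Longrightarrow> v (x * y) \<le> v y"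
  by (simp add: multiplicative mult_left_le_one_le nonneg)

lemma sum_le: "(\<And>i. i \<in> S \<Longrightarrow> v (f i) \<le> r) \<Longrightarrow> 0 \<le> r \<Longrightarrow> v (sum f S) \<le> r"
proof (induction S rule: infinite_finite_induct)
  case (insert x F)
  have "v (sum f (insert x F)) \<le> max (v (f x)) (v (sum f F))"
    using insert(1,2) ultrametric by simp
  moreover have "v (f x) \<le> r" "v (sum f F) \<le> r"
    using insert by auto
  ultimately show ?case
    by linarith
qed simp_all

lemma sum_less: "(\<And>i. i \<in> S \<Longrightarrow> v (f i) < r) \<Longrightarrow> 0 < r \<Longrightarrow> v (sum f S) < r"
proof (induction S rule: infinite_finite_induct)
  case (insert x F)
  have "v (sum f (insert x F)) \<le> max (v (f x)) (v (sum f F))"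
    using insert(1,2) ultrametric by simp
  moreover have "v (f x) < r" "v (sum f F) < r"
    using insert by auto
  ultimately show ?case
    by linarith
qed simp_all

lemma has_vsum_unique:
  assumes "has_vsum v f S s1" "has_vsum v f S s2"
  shows "s1 = s2"
proof (rule ccontr)
  assume "s1 \<noteq> s2"
  then have e: "0 < v (s1 - s2)"
    using nonneg[of "s1 - s2"] zero_iff[of "s1 - s2"] by simp
  obtain F1 where F1: "finite F1" "F1 \<subseteq> S"
    "\<forall>F. finite F \<and> F1 \<subseteq> F \<and> F \<subseteq> S \<longrightarrow> v (sum f F - s1) < v (s1 - s2)"
    using assms(1)[unfolded has_vsum_def, rule_format, OF e] by blast
  obtain F2 where F2: "finite F2" "F2 \<subseteq> S"
    "\<forall>F. finite F \<and> F2 \<subseteq> F \<and> F \<subseteq> S \<longrightarrow> v (sum f F - s2) < v (s1 - s2)"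
    using assms(2)[unfolded has_vsum_def, rule_format, OF e] by blast
  define s where "s = sum f (F1 \<union> F2)"
  have "v (s - s1) < v (s1 - s2)" "v (s - s2) < v (s1 - s2)"
    using F1 F2 unfolding s_def by auto
  moreover have "v (s1 - s2) \<le> max (v (s - s2)) (v (s - s1))"
    using diff_le_max[of "s - s2" "s - s1"] by simp
  ultimately show False
    by linarith
qed

lemma equiv_residue_rel: "equiv {x. v x \<le> 1} {(x, y). v x \<le> 1 \<and> v y \<le> 1 \<and> v (x - y) < 1}"
proof (rule equivI)
  show "trans {(x, y). v x \<le> 1 \<and> v y \<le> 1 \<and> v (x - y) < 1}"
  proof (rule transI, clarsimp)
    fix x y z
    assume "v (x - y) < 1" "v (y - z) < 1"
    then show "v (x - z) < 1"
      using ultrametric[of "x - y" "y - z"] by simp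
  qed
qed (auto simp: refl_on_def sym_def diff_commute)

lemma residue_field_representatives:
  obtains a where "\<And>X. X \<in> residue_field v \<Longrightarrow> v (a X) \<le> 1"
    and "\<And>X Y. X \<in> residue_field v \<Longrightarrow> Y \<in> residue_field v \<Longrightarrow> v (a X - a Y) < 1 \<Longrightarrow> X = Y"
proof
  let ?a = "\<lambda>X. SOME x. x \<in> X"
  have a_mem: "?a X \<in> X" if "X \<in> residue_field v" for X
    using in_quotient_imp_non_empty[OF equiv_residue_rel] that
    unfolding residue_field_def by (simp add: some_in_eq)
  show "v (?a X) \<le> 1" if "X \<in> residue_field v" for X
    using in_quotient_imp_subset[OF equiv_residue_rel] a_mem that
    unfolding residue_field_def by blast
  then show "X = Y" if "X \<in> residue_field v" "Y \<in> residue_field v" "v (?a X - ?a Y) < 1" for X Y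
    using quotient_eq_iff[OF equiv_residue_rel, of X Y "?a X" "?a Y"] a_mem that
    unfolding residue_field_def by blast
qed

end

definition integral_coeffs :: "('a::field \<Rightarrow> real) \<Rightarrow> 'a poly \<Rightarrow> bool" where
  "integral_coeffs v P \<longleftrightarrow> (\<forall>i. v (coeff P i) \<le> 1)"

(* sum_X c X / (x - a X) = partial_fraction_numerator F a c / prod_X (x - a X) *)
definition partial_fraction_numerator :: "'x set \<Rightarrow> ('x \<Rightarrow> 'a::field) \<Rightarrow> ('x \<Rightarrow> 'a) \<Rightarrow> 'a poly" where
  "partial_fraction_numerator F a c = (\<Sum>X\<in>F. smult (c X) (\<Prod>Y\<in>F - {X}. [:- a Y, 1:]))"

lemma sum_inverse_mult_prod:
  fixes g :: "'x \<Rightarrow> 'a::field"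
  assumes "finite F" "\<And>X. X \<in> F \<Longrightarrow> g X \<noteq> 0"
  shows "(\<Sum>X\<in>F. b X * inverse (g X)) * (\<Prod>X\<in>F. g X) = (\<Sum>X\<in>F. b X * (\<Prod>Y\<in>F - {X}. g Y))"
  unfolding sum_distrib_right
proof (rule sum.cong[OF refl])
  fix X
  assume "X \<in> F"
  then have "(\<Prod>X\<in>F. g X) = g X * (\<Prod>Y\<in>F - {X}. g Y)"
    using prod.remove[OF assms(1)] by blast
  then show "b X * inverse (g X) * (\<Prod>X\<in>F. g X) = b X * (\<Prod>Y\<in>F - {X}. g Y)"
    using assms(2)[OF \<open>X \<in> F\<close>] by simp
qed

lemma poly_partial_fraction_numerator_node:
  assumes "finite F" "j \<in> F"
  shows "poly (partial_fraction_numerator F a c) (a j) = c j * (\<Prod>Y\<in>F - {j}. a j - a Y)"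
proof -
  have vanish: "(\<Prod>Y\<in>F - {X}. a j - a Y) = 0" if "X \<in> F - {j}" for X
    using assms that by (intro prod_zero) auto
  have "poly (partial_fraction_numerator F a c) (a j) = (\<Sum>X\<in>F. c X * (\<Prod>Y\<in>F - {X}. a j - a Y))"
    by (simp add: partial_fraction_numerator_def poly_sum poly_prod)
  also have "\<dots> = c j * (\<Prod>Y\<in>F - {j}. a j - a Y)"
    by (subst sum.remove[OF assms]) (simp add: vanish)
  finally show ?thesis .
qed

lemma map_poly_add_hom:
  assumes "f 0 = 0" "\<And>x y. f (x + y) = f x + f y"
  shows "map_poly f (p + q) = map_poly f p + map_poly f q"
  by (intro poly_eqI) (simp add: coeff_map_poly assms)

lemma map_poly_sum_hom:
  assumes "f 0 = 0" "\<And>x y. f (x + y) = f x + f y"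
  shows "map_poly f (\<Sum>i\<in>A. P i) = (\<Sum>i\<in>A. map_poly f (P i))"
  by (induction A rule: infinite_finite_induct) (simp_all add: map_poly_add_hom[OF assms])

lemma map_poly_mult_hom:
  assumes "f 0 = 0" "\<And>x y. f (x + y) = f x + f y" "\<And>x y. f (x * y) = f x * f y"
  shows "map_poly f (p * q) = map_poly f p * map_poly f q"
  by (induction p rule: pCons_induct)
    (simp_all add: map_poly_add_hom[OF assms(1,2)] map_poly_smult[of f, OF assms(1,3)] map_poly_pCons[of f, OF assms(1)] assms(1))

lemma map_poly_prod_hom:
  assumes "f 0 = 0" "\<And>x y. f (x + y) = f x + f y" "\<And>x y. f (x * y) = f x * f y" "f 1 = 1"
  shows "map_poly f (\<Prod>i\<in>A. P i) = (\<Prod>i\<in>A. map_poly f (P i))"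
  by (induction A rule: infinite_finite_induct) (simp_all add: map_poly_mult_hom[OF assms(1-3)] assms(4))

context nonarch_absval
begin

lemma integral_coeffs_add: "integral_coeffs v p \<Longrightarrow> integral_coeffs v q \<Longrightarrow> integral_coeffs v (p + q)"
  unfolding integral_coeffs_def using ultrametric by (metis coeff_add max.bounded_iff order.trans)

lemma integral_coeffs_smult: "v c \<le> 1 \<Longrightarrow> integral_coeffs v p \<Longrightarrow> integral_coeffs v (smult c p)"
  unfolding integral_coeffs_def by (simp add: multiplicative mult_le_one nonneg)

lemma integral_coeffs_mult: "integral_coeffs v p \<Longrightarrow> integral_coeffs v q \<Longrightarrow> integral_coeffs v (p * q)"
  unfolding integral_coeffs_def coeff_mult by (auto intro!: sum_le simp: multiplicative mult_le_one nonneg)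

lemma integral_coeffs_sum: "(\<And>i. i \<in> A \<Longrightarrow> integral_coeffs v (P i)) \<Longrightarrow> integral_coeffs v (\<Sum>i\<in>A. P i)"
  by (induction A rule: infinite_finite_induct) (simp_all add: integral_coeffs_add, simp_all add: integral_coeffs_def)

lemma integral_coeffs_prod: "(\<And>i. i \<in> A \<Longrightarrow> integral_coeffs v (P i)) \<Longrightarrow> integral_coeffs v (\<Prod>i\<in>A. P i)"
  by (induction A rule: infinite_finite_induct)
    (simp_all add: integral_coeffs_mult, simp_all add: integral_coeffs_def coeff_1 nonneg)

lemma integral_coeffs_linear: "v a \<le> 1 \<Longrightarrow> integral_coeffs v [:- a, 1:]"
  unfolding integral_coeffs_def by (simp add: coeff_pCons split: nat.splits)

lemma integral_coeffs_partial_fraction_numerator: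
  "(\<And>X. X \<in> F \<Longrightarrow> v (a X) \<le> 1) \<Longrightarrow> (\<And>X. X \<in> F \<Longrightarrow> v (c X) \<le> 1)
    \<Longrightarrow> integral_coeffs v (partial_fraction_numerator F a c)"
  unfolding partial_fraction_numerator_def
  by (intro integral_coeffs_sum integral_coeffs_smult integral_coeffs_prod integral_coeffs_linear) auto

lemma poly_less_one:
  assumes "\<And>i. v (coeff P i) < 1" "v x \<le> 1"
  shows "v (poly P x) < 1"
  unfolding poly_altdef
proof (rule sum_less)
  fix i
  have "v (coeff P i) * v x ^ i \<le> v (coeff P i)"
    using assms(2) by (intro mult_right_le_one_le) (simp_all add: nonneg power_le_one)
  then show "v (coeff P i * x ^ i) < 1"
    using assms(1)[of i] by (simp add: multiplicative power)
qed simp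

lemma partial_fraction_numerator_unit_coeff:
  assumes "finite F" "j \<in> F" "c j = 1"
    and a_int: "\<And>X. X \<in> F \<Longrightarrow> v (a X) \<le> 1"
    and a_dist: "\<And>X Y. X \<in> F \<Longrightarrow> Y \<in> F \<Longrightarrow> v (a X - a Y) < 1 \<Longrightarrow> X = Y"
  obtains i where "\<not> v (coeff (partial_fraction_numerator F a c) i) < 1"
proof -
  have "v (a j - a Y) = 1" if "Y \<in> F - {j}" for Y
    using diff_le_max[of "a j" "a Y"] a_int[of j] a_int[of Y] a_dist[of j Y] assms(2) that by fastforce
  then have "v (poly (partial_fraction_numerator F a c) (a j)) = 1"
    using assms(1-3) by (simp add: poly_partial_fraction_numerator_node multiplicative prod)
  then show ?thesis
    using poly_less_one a_int[OF assms(2)] that by force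
qed

end

locale nonarch_embedding = K: nonarch_absval vK + L: nonarch_absval vL
  for vK :: "'k::field \<Rightarrow> real" and vL :: "'l::field \<Rightarrow> real" +
  fixes \<iota> :: "'k \<Rightarrow> 'l"
  assumes hom_add: "\<iota> (a + b) = \<iota> a + \<iota> b"
    and hom_mult: "\<iota> (a * b) = \<iota> a * \<iota> b"
    and hom_one: "\<iota> 1 = 1"
    and isometric: "vL (\<iota> a) = vK a"
begin

lemma hom_zero [simp]: "\<iota> 0 = 0"
  using hom_add[of 0 0] by (metis add.right_neutral add_left_cancel)

lemma hom_uminus: "\<iota> (- a) = - \<iota> a"
  by (metis add.right_inverse hom_add hom_zero minus_unique)

lemma hom_eq_0_iff: "\<iota> a = 0 \<longleftrightarrow> a = 0"
  by (metis K.zero_iff L.zero_iff isometric)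

sublocale over_K: vector_space "\<lambda>c x. \<iota> c * x"
  by unfold_locales (simp_all add: distrib_left distrib_right hom_add hom_mult hom_one mult.assoc)

lemma poly_map_poly_altdef: "poly (map_poly \<iota> P) t = (\<Sum>i\<le>degree P. \<iota> (coeff P i) * t ^ i)"
  by (simp add: poly_altdef degree_map_poly hom_eq_0_iff coeff_map_poly)

lemma residue_algebraicI_poly:
  assumes "integral_coeffs vK P" "\<not> vK (coeff P i) < 1" "vL (poly (map_poly \<iota> P) t) < 1"
  shows "residue_algebraic vK vL \<iota> t"
proof -
  have "i \<le> degree P"
    using assms(2) by (metis K.zero coeff_eq_0 not_le zero_less_one)
  then show ?thesis
    using assms unfolding residue_algebraic_def integral_coeffs_def poly_map_poly_altdef by blast
qed

lemma residue_transcendental_dist_one: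
  assumes "vL t \<le> 1" "\<not> residue_algebraic vK vL \<iota> t" "vK b \<le> 1"
  shows "vL (t - \<iota> b) = 1"
proof -
  have "poly (map_poly \<iota> [:- b, 1:]) t = t - \<iota> b"
    by (simp add: map_poly_pCons hom_uminus hom_one)
  then have "\<not> vL (t - \<iota> b) < 1"
    using residue_algebraicI_poly[of "[:- b, 1:]" 1 t] K.integral_coeffs_linear assms by auto
  moreover have "vL (t - \<iota> b) \<le> 1"
    using L.diff_le_max[of t "\<iota> b"] assms(1,3) isometric by simp
  ultimately show ?thesis
    by simp
qed

lemma poly_map_partial_fraction_numerator:
  "poly (map_poly \<iota> (partial_fraction_numerator F a c)) t = (\<Sum>X\<in>F. \<iota> (c X) * (\<Prod>Y\<in>F - {X}. t - \<iota> (a Y)))"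
  by (simp add: partial_fraction_numerator_def map_poly_sum_hom[of \<iota>, OF hom_zero hom_add]
      map_poly_smult[of \<iota>, OF hom_zero hom_mult] map_poly_prod_hom[of \<iota>, OF hom_zero hom_add hom_mult hom_one]
      map_poly_pCons hom_uminus hom_one poly_sum poly_prod)

lemma residue_algebraic_if_partial_fraction_small:
  assumes "vL t \<le> 1" and F: "finite F" "j \<in> F" "c j = 1"
    and a_int: "\<And>X. X \<in> F \<Longrightarrow> vK (a X) \<le> 1"
    and a_dist: "\<And>X Y. X \<in> F \<Longrightarrow> Y \<in> F \<Longrightarrow> vK (a X - a Y) < 1 \<Longrightarrow> X = Y"
    and c_int: "\<And>X. X \<in> F \<Longrightarrow> vK (c X) \<le> 1"
    and small: "vL (\<Sum>X\<in>F. \<iota> (c X) * inverse (t - \<iota> (a X))) < 1"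
  shows "residue_algebraic vK vL \<iota> t"
proof (rule ccontr)
  assume "\<not> residue_algebraic vK vL \<iota> t"
  then have unit: "vL (t - \<iota> (a X)) = 1" if "X \<in> F" for X
    using residue_transcendental_dist_one[OF \<open>vL t \<le> 1\<close> _ a_int[OF that]] by simp
  define P where "P = partial_fraction_numerator F a c"
  have "poly (map_poly \<iota> P) t
      = (\<Sum>X\<in>F. \<iota> (c X) * inverse (t - \<iota> (a X))) * (\<Prod>X\<in>F. t - \<iota> (a X))"
    using sum_inverse_mult_prod[OF F(1), of "\<lambda>X. t - \<iota> (a X)" "\<lambda>X. \<iota> (c X)"] unit
    by (force simp: P_def poly_map_partial_fraction_numerator)
  then have "vL (poly (map_poly \<iota> P) t) < 1"
    using small unit by (simp add: L.multiplicative L.prod)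
  moreover have "integral_coeffs vK P"
    unfolding P_def using a_int c_int by (rule K.integral_coeffs_partial_fraction_numerator)
  moreover obtain i where "\<not> vK (coeff P i) < 1"
    using K.partial_fraction_numerator_unit_coeff[of F j c a, OF F a_int a_dist] unfolding P_def by blast
  ultimately have "residue_algebraic vK vL \<iota> t"
    using residue_algebraicI_poly by blast
  with \<open>\<not> residue_algebraic vK vL \<iota> t\<close> show False
    by simp
qed

lemma approx_inverses_relation_trivial:
  assumes t: "vL t \<le> 1" "\<not> residue_algebraic vK vL \<iota> t"
    and F: "finite F"
    and a_int: "\<And>X. X \<in> F \<Longrightarrow> vK (a X) \<le> 1"
    and a_dist: "\<And>X Y. X \<in> F \<Longrightarrow> Y \<in> F \<Longrightarrow> vK (a X - a Y) < 1 \<Longrightarrow> X = Y"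
    and d: "\<And>X. X \<in> F \<Longrightarrow> vL (d X - inverse (t - \<iota> (a X))) < 1"
    and rel: "(\<Sum>X\<in>F. \<iota> (c X) * d X) = 0"
    and X0: "X0 \<in> F"
  shows "c X0 = 0"
proof (rule ccontr)
  assume "c X0 \<noteq> 0"
  have "Max ((\<lambda>X. vK (c X)) ` F) \<in> (\<lambda>X. vK (c X)) ` F"
    using F X0 by (intro Max_in) auto
  then obtain j where j: "j \<in> F" "vK (c j) = Max ((\<lambda>X. vK (c X)) ` F)"
    by auto
  have c_le: "vK (c X) \<le> vK (c j)" if "X \<in> F" for X
    using j(2) F that by simp
  have "0 < vK (c j)"
    using c_le[OF X0] \<open>c X0 \<noteq> 0\<close> K.nonneg[of "c X0"] K.zero_iff[of "c X0"] by linarith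
  define c' where "c' X = c X / c j" for X
  have c'_int: "vK (c' X) \<le> 1" if "X \<in> F" for X
    using c_le[OF that] \<open>0 < vK (c j)\<close> by (simp add: c'_def K.divide)
  have "c' j = 1"
    using \<open>0 < vK (c j)\<close> by (auto simp: c'_def)
  have "(\<Sum>X\<in>F. \<iota> (c' X) * d X) = \<iota> (inverse (c j)) * (\<Sum>X\<in>F. \<iota> (c X) * d X)"
    by (simp add: c'_def divide_inverse hom_mult sum_distrib_left mult_ac)
  then have "(\<Sum>X\<in>F. \<iota> (c' X) * inverse (t - \<iota> (a X)))
      = (\<Sum>X\<in>F. \<iota> (c' X) * (inverse (t - \<iota> (a X)) - d X))"
    using rel by (simp add: right_diff_distrib sum_subtractf)
  moreover have "vL (\<iota> (c' X) * (inverse (t - \<iota> (a X)) - d X)) < 1" if "X \<in> F" for X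
    using L.mult_le_right[of "\<iota> (c' X)"] c'_int[OF that] d[OF that] L.diff_commute[of "d X"] isometric
    by (metis le_less_trans)
  ultimately have "vL (\<Sum>X\<in>F. \<iota> (c' X) * inverse (t - \<iota> (a X))) < 1"
    by (simp add: L.sum_less)
  then have "residue_algebraic vK vL \<iota> t"
    using residue_algebraic_if_partial_fraction_small[where c = c' and a = a, OF t(1) F j(1) \<open>c' j = 1\<close> a_int a_dist c'_int] by blast
  with t(2) show False
    by simp
qed

lemma approx_inverses_inj:
  assumes t: "vL t \<le> 1" "\<not> residue_algebraic vK vL \<iota> t"
    and a_int: "\<And>X. X \<in> F \<Longrightarrow> vK (a X) \<le> 1"
    and a_dist: "\<And>X Y. X \<in> F \<Longrightarrow> Y \<in> F \<Longrightarrow> vK (a X - a Y) < 1 \<Longrightarrow> X = Y"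
    and d: "\<And>X. X \<in> F \<Longrightarrow> vL (d X - inverse (t - \<iota> (a X))) < 1"
  shows "inj_on d F"
proof (rule inj_onI, rule ccontr)
  fix X Y
  assume XY: "X \<in> F" "Y \<in> F" "d X = d Y" "X \<noteq> Y"
  define c :: "_ \<Rightarrow> 'k" where "c Z = (if Z = X then 1 else - 1)" for Z
  have rel: "(\<Sum>Z\<in>{X, Y}. \<iota> (c Z) * d Z) = 0"
    using XY by (simp add: c_def hom_one hom_uminus)
  have "c X = 0"
    by (rule approx_inverses_relation_trivial[OF t, of "{X, Y}" a d c])
      (use XY a_int a_dist d rel in \<open>blast | simp\<close>)+
  then show False
    by (simp add: c_def)
qed

lemma approx_inverses_independent:
  assumes t: "vL t \<le> 1" "\<not> residue_algebraic vK vL \<iota> t"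
    and a_int: "\<And>X. X \<in> F \<Longrightarrow> vK (a X) \<le> 1"
    and a_dist: "\<And>X Y. X \<in> F \<Longrightarrow> Y \<in> F \<Longrightarrow> vK (a X - a Y) < 1 \<Longrightarrow> X = Y"
    and d: "\<And>X. X \<in> F \<Longrightarrow> vL (d X - inverse (t - \<iota> (a X))) < 1"
  shows "over_K.independent (d ` F)"
  unfolding over_K.independent_explicit_module
proof (intro allI impI)
  fix T u w
  assume T: "finite T" "T \<subseteq> d ` F" "(\<Sum>w\<in>T. \<iota> (u w) * w) = 0" "w \<in> T"
  define G where "G = {X \<in> F. d X \<in> T}"
  have inj: "inj_on d G"
    using approx_inverses_inj[OF t a_int a_dist d] by (rule inj_on_subset) (auto simp: G_def)
  have T_eq: "T = d ` G"
    using T(2) by (auto simp: G_def)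
  then have "finite G"
    using T(1) inj finite_imageD by blast
  moreover have "G \<subseteq> F"
    by (auto simp: G_def)
  moreover have "(\<Sum>X\<in>G. \<iota> (u (d X)) * d X) = 0"
    using T(3) unfolding T_eq sum.reindex[OF inj] by simp
  moreover obtain X where "X \<in> G" "w = d X"
    using T(4) T_eq by blast
  ultimately show "u w = 0"
    using approx_inverses_relation_trivial[OF t, of G a d "\<lambda>X. u (d X)" X] a_int a_dist d
    by (metis subsetD)
qed

end

lemma nonarch_ext_imp_nonarch_embedding:
  assumes "nonarch_ext vK vL \<iota>"
  shows "nonarch_embedding vK vL \<iota>"
proof -
  have L: "nonarch_abs vL" and add: "\<And>a b. \<iota> (a + b) = \<iota> a + \<iota> b"
    and mult: "\<And>a b. \<iota> (a * b) = \<iota> a * \<iota> b" and one: "\<iota> 1 = 1" and iso: "\<And>a. vL (\<iota> a) = vK a"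
    using assms unfolding nonarch_ext_def nonarch_field_def by blast+
  interpret L: nonarch_absval vL
    by (rule nonarch_absval.intro[OF L])
  have "\<iota> a = 0 \<longleftrightarrow> a = 0" for a
    by (metis add add_cancel_right_left mult mult_zero_left one right_inverse zero_neq_one)
  then have "nonarch_abs vK"
    unfolding nonarch_abs_def by (simp flip: iso add: L.nonneg L.zero_iff L.multiplicative L.ultrametric add mult)
  then show ?thesis
    by (intro nonarch_embedding.intro nonarch_absval.intro nonarch_embedding_axioms.intro L add mult one iso)
qed

lemma (in vector_space) countable_independent_if_subset_span_countable:
  assumes "countable B" "independent S" "S \<subseteq> span B"
  shows "countable S"
proof -
  have "\<exists>E. finite E \<and> E \<subseteq> B \<and> s \<in> span E" if "s \<in> S" for s
  proof -
    obtain E r where "finite E" "E \<subseteq> B" "s = (\<Sum>x\<in>E. scale (r x) x)"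
      using \<open>s \<in> S\<close> assms(3) unfolding span_explicit by blast
    then show ?thesis
      by (intro exI[of _ E]) (auto intro: span_sum span_scale span_base)
  qed
  then obtain E where E: "\<And>s. s \<in> S \<Longrightarrow> finite (E s) \<and> E s \<subseteq> B \<and> s \<in> span (E s)"
    by metis
  have "finite {s \<in> S. E s = E'}" if "finite E'" for E'
    using independent_span_bound[OF that independent_mono[OF assms(2)], of "{s \<in> S. E s = E'}"] E by auto
  moreover have "S = (\<Union>E' \<in> {E'. finite E' \<and> E' \<subseteq> B}. {s \<in> S. E s = E'})"
    using E by blast
  ultimately show ?thesis
    using countable_Collect_finite_subset[OF assms(1)] by (metis (no_types, lifting) countable_UN countable_finite mem_Collect_eq)
qed

definition tate_monomial :: "'k::field \<Rightarrow> (nat \<Rightarrow> rat) \<Rightarrow> ((nat \<Rightarrow> rat) \<Rightarrow> 'k)" where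
  "tate_monomial c x = (\<lambda>e. if e = x then c else 0)"

definition tate_truncate :: "(nat \<Rightarrow> rat) set \<Rightarrow> ((nat \<Rightarrow> rat) \<Rightarrow> 'k::field) \<Rightarrow> ((nat \<Rightarrow> rat) \<Rightarrow> 'k)" where
  "tate_truncate E a = (\<lambda>e. if e \<in> E then a e else 0)"

lemma pexp_zero: "(\<lambda>_. 0) \<in> pexp p n"
  unfolding pexp_def by (auto intro!: exI[of _ 0])

lemma countable_pexp: "countable (pexp p n)"
proof -
  have "inj_on (\<lambda>e. map e [0..<n]) (pexp p n)"
  proof (rule inj_onI, rule ext)
    fix e e' i
    assume "e \<in> pexp p n" "e' \<in> pexp p n" "map e [0..<n] = map e' [0..<n]"
    then show "e i = e' i"
      by (cases "i < n") (auto simp: pexp_def map_eq_conv)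
  qed
  then show ?thesis
    by (rule countable_image_inj_on[OF countableI_type])
qed

lemma tate_const_eq_monomial: "tate_const c = tate_monomial c (\<lambda>_. 0)"
  by (auto simp: tate_const_def tate_monomial_def fun_eq_iff)

lemma tate_monomial_eq_truncate: "tate_monomial c x = tate_truncate {x} (\<lambda>_. c)"
  by (auto simp: tate_monomial_def tate_truncate_def)

lemma tate_truncate_insert:
  "x \<notin> E \<Longrightarrow> tate_truncate (insert x E) a = tate_add (tate_monomial (a x) x) (tate_truncate E a)"
  by (auto simp: tate_truncate_def tate_add_def tate_monomial_def)

lemma gauss_norm_le: "(\<And>e. v (a e) \<le> r) \<Longrightarrow> gauss_norm v a \<le> r"
  unfolding gauss_norm_def by (rule cSup_least) auto

lemma has_vsum_finite_support:
  assumes "v 0 = 0" "finite F0" "F0 \<subseteq> S" "\<And>i. i \<in> S - F0 \<Longrightarrow> f i = 0"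
  shows "has_vsum v f S (sum f F0)"
  unfolding has_vsum_def
proof (intro allI impI)
  fix \<epsilon> :: real
  assume "0 < \<epsilon>"
  show "\<exists>F1. finite F1 \<and> F1 \<subseteq> S \<and> (\<forall>F. finite F \<and> F1 \<subseteq> F \<and> F \<subseteq> S \<longrightarrow> v (sum f F - sum f F0) < \<epsilon>)"
  proof (intro exI[of _ F0] conjI allI impI)
    fix F
    assume "finite F \<and> F0 \<subseteq> F \<and> F \<subseteq> S"
    then have "sum f F = sum f F0"
      using assms(4) by (intro sum.mono_neutral_right) auto
    then show "v (sum f F - sum f F0) < \<epsilon>"
      using assms(1) \<open>0 < \<epsilon>\<close> by simp
  qed (use assms(2,3) in auto)
qed

context nonarch_absval
begin

lemma tate_truncate_mem:
  assumes "finite E" "E \<subseteq> pexp p n"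
  shows "tate_truncate E a \<in> perfd_tate v p n"
  unfolding perfd_tate_def
proof (intro CollectI conjI allI impI)
  fix \<epsilon> :: real
  assume "0 < \<epsilon>"
  then have "{e. \<epsilon> \<le> v (tate_truncate E a e)} \<subseteq> E"
    by (auto simp: tate_truncate_def)
  then show "finite {e. \<epsilon> \<le> v (tate_truncate E a e)}"
    using assms(1) finite_subset by blast
qed (use assms(2) in \<open>auto simp: tate_truncate_def\<close>)

lemma tate_monomial_mem: "x \<in> pexp p n \<Longrightarrow> tate_monomial c x \<in> perfd_tate v p n"
  unfolding tate_monomial_eq_truncate by (rule tate_truncate_mem) auto

lemma tate_const_mem: "tate_const c \<in> perfd_tate v p n"
  unfolding tate_const_eq_monomial by (rule tate_monomial_mem[OF pexp_zero])

lemma tate_mult_const_monomial: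
  assumes "x \<in> pexp p n"
  shows "tate_mult v p n (tate_const c) (tate_monomial 1 x) = tate_monomial c x"
proof
  fix e
  define S where "S = {(e1, e2). e1 \<in> pexp p n \<and> e2 \<in> pexp p n \<and> (\<forall>i. e1 i + e2 i = e i)}"
  define f where "f = (\<lambda>(e1, e2). tate_const c e1 * tate_monomial 1 x e2)"
  define F0 where "F0 = S \<inter> {((\<lambda>_. 0), x)}"
  have "has_vsum v f S (sum f F0)"
    by (rule has_vsum_finite_support)
      (auto simp: F0_def f_def tate_const_def tate_monomial_def split: if_splits)
  then have "(THE s. has_vsum v f S s) = sum f F0"
    using has_vsum_unique by blast
  moreover have "sum f F0 = tate_monomial c x e"
  proof (cases "e = x")
    case True
    then have "F0 = {((\<lambda>_. 0), x)}"
      using assms pexp_zero by (auto simp: F0_def S_def)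
    then show ?thesis
      using True by (simp add: f_def tate_const_def tate_monomial_def)
  next
    case False
    then have "F0 = {}"
      by (auto simp: F0_def S_def fun_eq_iff) metis
    then show ?thesis
      using False by (simp add: tate_monomial_def)
  qed
  ultimately show "tate_mult v p n (tate_const c) (tate_monomial 1 x) e = tate_monomial c x e"
    by (simp add: tate_mult_def S_def f_def)
qed

lemma perfd_tate_truncate_close:
  assumes "a \<in> perfd_tate v p n" "0 < \<epsilon>"
  obtains E where "finite E" "E \<subseteq> pexp p n" "gauss_norm v (\<lambda>e. tate_truncate E a e - a e) < \<epsilon>"
proof
  let ?E = "{e. \<epsilon> / 2 \<le> v (a e)}"
  show "finite ?E"
    using assms(1) half_gt_zero[OF assms(2)] unfolding perfd_tate_def by blast
  show "?E \<subseteq> pexp p n"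
    using assms unfolding perfd_tate_def by force
  have "gauss_norm v (\<lambda>e. tate_truncate ?E a e - a e) \<le> \<epsilon> / 2"
    using assms(2) by (intro gauss_norm_le) (auto simp: tate_truncate_def)
  then show "gauss_norm v (\<lambda>e. tate_truncate ?E a e - a e) < \<epsilon>"
    using assms(2) by linarith
qed

end

context nonarch_embedding
begin

lemma
  assumes "tate_quotient_map vK vL \<iota> p n \<phi>"
  shows tate_quotient_map_add:
      "a \<in> perfd_tate vK p n \<Longrightarrow> b \<in> perfd_tate vK p n \<Longrightarrow> \<phi> (tate_add a b) = \<phi> a + \<phi> b"
    and tate_quotient_map_mult:
      "a \<in> perfd_tate vK p n \<Longrightarrow> b \<in> perfd_tate vK p n \<Longrightarrow> \<phi> (tate_mult vK p n a b) = \<phi> a * \<phi> b"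
    and tate_quotient_map_const: "\<phi> (tate_const c) = \<iota> c"
    and tate_quotient_map_continuous: "a \<in> perfd_tate vK p n \<Longrightarrow> 0 < \<epsilon> \<Longrightarrow>
      \<exists>\<delta>>0. \<forall>b\<in>perfd_tate vK p n. gauss_norm vK (\<lambda>e. b e - a e) < \<delta> \<longrightarrow> vL (\<phi> b - \<phi> a) < \<epsilon>"
    and tate_quotient_map_surj: "\<phi> ` perfd_tate vK p n = UNIV"
  using assms unfolding tate_quotient_map_def by blast+

lemma tate_quotient_map_monomial:
  assumes \<phi>: "tate_quotient_map vK vL \<iota> p n \<phi>" and x: "x \<in> pexp p n"
  shows "\<phi> (tate_monomial c x) = \<iota> c * \<phi> (tate_monomial 1 x)"
proof -
  have "\<phi> (tate_monomial c x) = \<phi> (tate_mult vK p n (tate_const c) (tate_monomial 1 x))"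
    by (simp add: K.tate_mult_const_monomial[OF x])
  also have "\<dots> = \<iota> c * \<phi> (tate_monomial 1 x)"
    by (simp add: tate_quotient_map_mult[OF \<phi>] tate_quotient_map_const[OF \<phi>] K.tate_const_mem K.tate_monomial_mem x)
  finally show ?thesis .
qed

lemma tate_quotient_map_truncate:
  assumes \<phi>: "tate_quotient_map vK vL \<iota> p n \<phi>" and "finite E" "E \<subseteq> pexp p n"
  shows "\<phi> (tate_truncate E a) = (\<Sum>e\<in>E. \<iota> (a e) * \<phi> (tate_monomial 1 e))"
  using assms(2,3)
proof (induction E rule: finite_induct)
  case empty
  have "tate_add (tate_truncate {} a) (tate_truncate {} a) = tate_truncate {} a"
    by (simp add: tate_add_def tate_truncate_def)
  then have "\<phi> (tate_truncate {} a) = \<phi> (tate_truncate {} a) + \<phi> (tate_truncate {} a)"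
    by (metis K.tate_truncate_mem empty_subsetI finite.emptyI tate_quotient_map_add[OF \<phi>])
  then show ?case
    by (metis add_cancel_left_right sum.empty)
next
  case (insert x E)
  then have "\<phi> (tate_truncate (insert x E) a) = \<phi> (tate_monomial (a x) x) + \<phi> (tate_truncate E a)"
    by (simp add: tate_truncate_insert tate_quotient_map_add[OF \<phi>] K.tate_monomial_mem K.tate_truncate_mem)
  then show ?case
    using insert tate_quotient_map_monomial[OF \<phi>, of x "a x"] by simp
qed

lemma tate_quotient_map_approx:
  assumes \<phi>: "tate_quotient_map vK vL \<iota> p n \<phi>"
  shows "\<exists>d\<in>over_K.span ((\<lambda>e. \<phi> (tate_monomial 1 e)) ` pexp p n). vL (d - u) < 1"
proof -
  obtain a where a: "a \<in> perfd_tate vK p n" "\<phi> a = u"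
    using tate_quotient_map_surj[OF \<phi>] by (metis UNIV_I image_iff)
  obtain \<delta> where "0 < \<delta>"
    and \<delta>: "\<And>b. b \<in> perfd_tate vK p n \<Longrightarrow> gauss_norm vK (\<lambda>e. b e - a e) < \<delta> \<Longrightarrow> vL (\<phi> b - \<phi> a) < 1"
    using tate_quotient_map_continuous[OF \<phi> a(1) zero_less_one] by blast
  obtain E where E: "finite E" "E \<subseteq> pexp p n" "gauss_norm vK (\<lambda>e. tate_truncate E a e - a e) < \<delta>"
    using K.perfd_tate_truncate_close[OF a(1) \<open>0 < \<delta>\<close>] by blast
  have "vL (\<phi> (tate_truncate E a) - u) < 1"
    using \<delta>[OF K.tate_truncate_mem[OF E(1,2)] E(3)] a(2) by simp
  moreover have "\<phi> (tate_truncate E a) \<in> over_K.span ((\<lambda>e. \<phi> (tate_monomial 1 e)) ` pexp p n)"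
    unfolding tate_quotient_map_truncate[OF \<phi> E(1,2)]
    by (intro over_K.span_sum over_K.span_scale over_K.span_base) (use E(2) in auto)
  ultimately show ?thesis
    by blast
qed

end

theorem corollary6p5:
  fixes vK :: "'k::field \<Rightarrow> real" and vL :: "'l::field \<Rightarrow> real"
    and \<iota> :: "'k \<Rightarrow> 'l" and p :: nat
  assumes "perfectoid_field vK p"
    and "nonarch_ext vK vL \<iota>"
    and "residue_trdeg_pos vK vL \<iota>"
    and "uncountable (residue_field vK)"
  shows "\<not> (\<exists>(n::nat) \<phi>. tate_quotient_map vK vL \<iota> p n \<phi>)"
proof
  assume "\<exists>(n::nat) \<phi>. tate_quotient_map vK vL \<iota> p n \<phi>"
  then obtain n \<phi> where \<phi>: "tate_quotient_map vK vL \<iota> p n \<phi>"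
    by blast
  interpret nonarch_embedding vK vL \<iota>
    using assms(2) by (rule nonarch_ext_imp_nonarch_embedding)
  obtain t where t: "vL t \<le> 1" "\<not> residue_algebraic vK vL \<iota> t"
    using assms(3) unfolding residue_trdeg_pos_def by blast
  obtain a where a_int: "\<And>X. X \<in> residue_field vK \<Longrightarrow> vK (a X) \<le> 1"
    and a_dist: "\<And>X Y. X \<in> residue_field vK \<Longrightarrow> Y \<in> residue_field vK \<Longrightarrow> vK (a X - a Y) < 1 \<Longrightarrow> X = Y"
    using K.residue_field_representatives by blast
  define M where "M = (\<lambda>e. \<phi> (tate_monomial 1 e)) ` pexp p n"
  have "\<forall>X. \<exists>d. d \<in> over_K.span M \<and> vL (d - inverse (t - \<iota> (a X))) < 1"
    using tate_quotient_map_approx[OF \<phi>] unfolding M_def by blast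
  then obtain d where d_span: "\<And>X. d X \<in> over_K.span M"
    and d_approx: "\<And>X. vL (d X - inverse (t - \<iota> (a X))) < 1"
    by (metis choice)
  have "countable (d ` residue_field vK)"
  proof (rule over_K.countable_independent_if_subset_span_countable)
    show "countable M"
      unfolding M_def by (intro countable_image countable_pexp)
    show "over_K.independent (d ` residue_field vK)"
      using approx_inverses_independent[OF t a_int a_dist d_approx] .
  qed (use d_span in blast)
  then have "countable (residue_field vK)"
    by (rule countable_image_inj_on[OF _ approx_inverses_inj[OF t a_int a_dist d_approx]])
  with assms(4) show False
    by simp
qed

end
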